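(* Let $|\Psi\rangle$ be a Haar random pure state in a $d$-dimensional Hilbert space, $|\Psi_0\rangle$ an arbitrary fixed unit vector, and $0<\epsilon<1$. Then $$\Pr\big[\||\Psi\rangle-|\Psi_0\rangle\|_2\le\epsilon\big]<\frac{g(\epsilon)^{2d-1}V_{2d-1}}{S_{2d-1}},\qquad g(\epsilon)=\frac{\epsilon}{\sqrt{1-\epsilon^2}}.$$
   Context: A Haar random pure state (with phase) is a uniformly random point of the unit sphere $S^{2d-1}\subset\mathbb{R}^{2d}\cong\mathbb{C}^d$. $S_{p-1}=2\pi^{p/2}/\Gamma(p/2)$ is the area of the unit sphere in $\mathbb{R}^p$ and $V_p=\pi^{p/2}/\Gamma(p/2+1)$ is the volume of the unit ball in $\mathbb{R}^p$. *)

theory Defs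
  imports "HOL-Analysis.Analysis"
begin

text \<open>Uniform (Haar) distribution on the unit sphere of a Euclidean space, realised as the
  radial projection of the uniform distribution on the closed unit ball (the cone measure,
  which coincides with the normalised surface measure on the sphere).  For
  the space complex ^ 'n (i.e. C^d, d = CARD('n), viewed as R^(2d)) this is the
  Haar random pure state with phase.\<close>
definition sphere_uniform :: "'a::euclidean_space measure" where
  "sphere_uniform = distr (uniform_measure lborel (cball 0 1)) borel (\<lambda>x. x /\<^sub>R norm x)"

definition ball_vol :: "nat \<Rightarrow> real" where
  "ball_vol p = pi powr (real p / 2) / Gamma (real p / 2 + 1)"

text \<open>Area S_(p-1) of the unit sphere in R^p; sphere_area p = S_(p-1).\<close>
definition sphere_area :: "nat \<Rightarrow> real" where
  "sphere_area p = 2 * pi powr (real p / 2) / Gamma (real p / 2)"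

end

theory Submission
  imports Defs
begin

(* Identify C^d with R^p, p = 2d.  Under the cone measure, the probability of the cap
   {y. norm (y - u) <= eps} of the unit sphere is the volume of the part of the unit ball
   lying over the cap, divided by the ball volume V_p.  The cap has angular radius theta with
   cos theta = 1 - eps^2/2, so this solid lies in the circular cone of height 1 and slope
   tan theta around u.  Rotating u onto a coordinate axis (rotations preserve Lebesgue measure)
   and slicing orthogonally to that axis gives the cone volume V_(p-1) tan^(p-1) theta / p.
   Finally S_(p-1) = p V_p, and tan theta < eps / sqrt (1 - eps^2) for 0 < eps < 1. *)

lemma nn_integral_power_unit_interval:
  "(\<integral>\<^sup>+ y. ennreal (y ^ k) * indicator {0..1::real} y \<partial>lborel) = ennreal (1 / Suc k)"
proof -
  have "((\<lambda>x. x ^ Suc k / Suc k) has_real_derivative y ^ k) (at y)" for y :: real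
    using DERIV_cdivide[OF DERIV_pow[of "Suc k" y], of "Suc k"] by simp
  then have "(\<integral>\<^sup>+ y. ennreal (y ^ k) * indicator {0..1::real} y \<partial>lborel)
      = ennreal (1 ^ Suc k / Suc k - 0 ^ Suc k / Suc k)"
    by (intro nn_integral_FTC_Icc) auto
  then show ?thesis by simp
qed

lemma nn_integral_cone_slices:
  assumes A: "finite A" and r: "r > 0"
  shows "(\<integral>\<^sup>+ y. indicator {0..1} y * emeasure (Pi\<^sub>M A (\<lambda>_. lborel))
      {f \<in> space (Pi\<^sub>M A (\<lambda>_. lborel)). sqrt (\<Sum>j\<in>A. (f j)\<^sup>2) \<le> r * y} \<partial>lborel)
    = ennreal (unit_ball_vol (card A) * r ^ card A / Suc (card A))"
proof -
  let ?slice = "\<lambda>y. {f \<in> space (Pi\<^sub>M A (\<lambda>_. lborel)). sqrt (\<Sum>j\<in>A. (f j)\<^sup>2) \<le> r * y}"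
  have "AE y in lborel. indicator {0..1} y * emeasure (Pi\<^sub>M A (\<lambda>_. lborel)) (?slice y)
      = ennreal (unit_ball_vol (card A) * r ^ card A) * (ennreal (y ^ card A) * indicator {0..1} y)"
    using AE_lborel_singleton[of 0]
  proof eventually_elim
    case (elim y)
    show ?case
    proof (cases "y \<in> {0..1}")
      case True
      with elim r have "r * y > 0" by auto
      have "?slice y = {f. sqrt (\<Sum>j\<in>A. (f j)\<^sup>2) \<le> r * y} \<inter> space (Pi\<^sub>M A (\<lambda>_. lborel))"
        by auto
      with True r emeasure_cball_aux[OF A \<open>r * y > 0\<close>] show ?thesis
        by (simp add: power_mult_distrib ennreal_mult'[symmetric] mult_ac)
    qed simp
  qed
  then have "(\<integral>\<^sup>+ y. indicator {0..1} y * emeasure (Pi\<^sub>M A (\<lambda>_. lborel)) (?slice y) \<partial>lborel)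
      = ennreal (unit_ball_vol (card A) * r ^ card A) * (\<integral>\<^sup>+ y. ennreal (y ^ card A) * indicator {0..1} y \<partial>lborel)"
    by (simp add: nn_integral_cong_AE nn_integral_cmult)
  also have "\<dots> = ennreal (unit_ball_vol (card A) * r ^ card A / Suc (card A))"
    using r by (simp add: nn_integral_power_unit_interval ennreal_mult'[symmetric])
  finally show ?thesis .
qed

lemma emeasure_PiM_cone:
  assumes "finite A" "i \<notin> A" "r > 0"
  shows "emeasure (Pi\<^sub>M (insert i A) (\<lambda>_. lborel)) {f \<in> space (Pi\<^sub>M (insert i A) (\<lambda>_. lborel)).
      0 \<le> f i \<and> f i \<le> 1 \<and> sqrt (\<Sum>j\<in>A. (f j)\<^sup>2) \<le> r * f i}
    = ennreal (unit_ball_vol (card A) * r ^ card A / Suc (card A))"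
proof -
  interpret product_sigma_finite "\<lambda>_. lborel :: real measure" by standard
  let ?P = "Pi\<^sub>M (insert i A) (\<lambda>_. lborel)"
  let ?cone = "{f \<in> space ?P. 0 \<le> f i \<and> f i \<le> 1 \<and> sqrt (\<Sum>j\<in>A. (f j)\<^sup>2) \<le> r * f i}"
  let ?slice = "\<lambda>y. {f \<in> space (Pi\<^sub>M A (\<lambda>_. lborel)). sqrt (\<Sum>j\<in>A. (f j)\<^sup>2) \<le> r * y}"
  have slice_sets: "?slice y \<in> sets (Pi\<^sub>M A (\<lambda>_. lborel))" for y
    by measurable
  have [measurable]: "(\<lambda>f. f j) \<in> borel_measurable ?P" if "j \<in> insert i A" for j
    using that measurable_component_singleton[of j "insert i A" "\<lambda>_. lborel"] by simp
  have "{f \<in> space ?P. sqrt (\<Sum>j\<in>A. (f j)\<^sup>2) \<le> r * f i} \<in> sets ?P"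
    by (rule borel_measurable_le) measurable
  then have cone_sets: "?cone \<in> sets ?P"
    by measurable
  have "emeasure ?P ?cone = (\<integral>\<^sup>+ f. indicator ?cone f \<partial>?P)"
    using cone_sets by (rule nn_integral_indicator[symmetric])
  also have "\<dots> = (\<integral>\<^sup>+ y. \<integral>\<^sup>+ f. indicator ?cone (f(i := y)) \<partial>Pi\<^sub>M A (\<lambda>_. lborel) \<partial>lborel)"
    using assms cone_sets by (subst product_nn_integral_insert_rev) auto
  also have "\<dots> = (\<integral>\<^sup>+ y. indicator {0..1} y * emeasure (Pi\<^sub>M A (\<lambda>_. lborel)) (?slice y) \<partial>lborel)"
  proof (intro nn_integral_cong)
    fix y :: real
    have "(\<Sum>j\<in>A. (if j = i then y else f j)\<^sup>2) = (\<Sum>j\<in>A. (f j)\<^sup>2)" for f :: "'a \<Rightarrow> real"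
      using assms(2) by (intro sum.cong) auto
    then have "(\<integral>\<^sup>+ f. indicator ?cone (f(i := y)) \<partial>Pi\<^sub>M A (\<lambda>_. lborel))
      = (\<integral>\<^sup>+ f. indicator {0..1} y * indicator (?slice y) f \<partial>Pi\<^sub>M A (\<lambda>_. lborel))"
      using assms(2) by (intro nn_integral_cong) (auto simp: indicator_def PiE_def space_PiM extensional_def)
    also have "\<dots> = indicator {0..1} y * emeasure (Pi\<^sub>M A (\<lambda>_. lborel)) (?slice y)"
      using slice_sets by (simp add: nn_integral_cmult nn_integral_indicator)
    finally show "(\<integral>\<^sup>+ f. indicator ?cone (f(i := y)) \<partial>Pi\<^sub>M A (\<lambda>_. lborel))
      = indicator {0..1} y * emeasure (Pi\<^sub>M A (\<lambda>_. lborel)) (?slice y)" .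
  qed
  also have "\<dots> = ennreal (unit_ball_vol (card A) * r ^ card A / Suc (card A))"
    using assms(1,3) by (rule nn_integral_cone_slices)
  finally show ?thesis .
qed

lemma open_disjoint_balls_decomposition:
  fixes U :: "'a::euclidean_space set"
  assumes U: "open U"
  obtains C :: "('a \<times> real) set" where "countable C"
    "\<And>i. i \<in> C \<Longrightarrow> 0 < snd i \<and> ball (fst i) (snd i) \<subseteq> U"
    "disjoint_family_on (\<lambda>i. ball (fst i) (snd i)) C"
    "negligible (U - (\<Union>i\<in>C. ball (fst i) (snd i)))"
proof -
  let ?K = "{(x, r). r > 0 \<and> ball x r \<subseteq> U}"
  obtain C where C: "countable C" "C \<subseteq> ?K"
    and disj: "pairwise (\<lambda>i j. disjnt (ball (fst i) (snd i)) (ball (fst j) (snd j))) C"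
    and null: "negligible (U - (\<Union>i\<in>C. ball (fst i) (snd i)))"
  proof (rule Vitali_covering_theorem_balls[of U ?K fst snd])
    fix x and d :: real
    assume "x \<in> U" "0 < d"
    with U obtain e where "e > 0" "ball x e \<subseteq> U" by (meson openE)
    with \<open>0 < d\<close> show "\<exists>i. i \<in> ?K \<and> x \<in> ball (fst i) (snd i) \<and> snd i < d"
      by (intro exI[of _ "(x, min e (d / 2))"]) auto
  qed
  moreover have "disjoint_family_on (\<lambda>i. ball (fst i) (snd i)) C"
    using disj unfolding disjoint_family_on_def pairwise_def disjnt_def by blast
  ultimately show ?thesis
    using null that by fastforce
qed

(* Change_Of_Vars.measure_orthogonal_image covers only real^'n; here the proof goes through
   the Vitali decomposition, since g maps balls to balls of the same radius. *)

lemma emeasure_orthogonal_image_open_le: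
  fixes g :: "'a::euclidean_space \<Rightarrow> 'a"
  assumes g: "orthogonal_transformation g" and U: "open U"
  shows "emeasure lebesgue (g ` U) \<le> emeasure lebesgue U"
proof -
  obtain C where C: "countable C" "\<And>i. i \<in> C \<Longrightarrow> 0 < snd i \<and> ball (fst i) (snd i) \<subseteq> U"
    and disjB: "disjoint_family_on (\<lambda>i. ball (fst i) (snd i)) C"
    and null: "negligible (U - (\<Union>i\<in>C. ball (fst i) (snd i)))"
    using open_disjoint_balls_decomposition[OF U] by blast
  define B where "B i = ball (fst i) (snd i)" for i :: "'a \<times> real"
  define N where "N = U - (\<Union>i\<in>C. B i)"
  have lin: "linear g" and inj: "inj g"
    using g by (simp_all add: orthogonal_transformation_linear orthogonal_transformation_inj)
  have gB: "g ` B i = ball (g (fst i)) (snd i)" for i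
    unfolding B_def using g by (rule image_orthogonal_transformation_ball)
  have "negligible (g ` N)"
    using null lin unfolding N_def B_def
    by (intro negligible_differentiable_image_negligible linear_imp_differentiable_on) auto
  then have gN: "g ` N \<in> null_sets lebesgue"
    by (simp add: negligible_iff_null_sets)
  have disj_gB: "disjoint_family_on (\<lambda>i. g ` B i) C"
    using disjB unfolding B_def disjoint_family_on_def image_Int[OF inj, symmetric] by simp
  have open_gB: "open (\<Union>i\<in>C. g ` B i)"
    unfolding gB by (intro open_UN) auto
  have "g ` U \<subseteq> (\<Union>i\<in>C. g ` B i) \<union> g ` N"
    unfolding N_def by blast
  then have "emeasure lebesgue (g ` U) \<le> emeasure lebesgue ((\<Union>i\<in>C. g ` B i) \<union> g ` N)"
    using open_gB gN by (intro emeasure_mono) (auto simp: borel_open)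
  also have "\<dots> = emeasure lebesgue (\<Union>i\<in>C. g ` B i)"
    using open_gB gN by (intro emeasure_Un_null_set) (auto simp: borel_open)
  also have "\<dots> = (\<integral>\<^sup>+i. emeasure lebesgue (g ` B i) \<partial>count_space C)"
    using C(1) disj_gB by (intro emeasure_UN_countable) (auto simp: gB)
  also have "\<dots> = (\<integral>\<^sup>+i. emeasure lebesgue (B i) \<partial>count_space C)"
  proof (intro nn_integral_cong)
    fix i
    assume "i \<in> space (count_space C)"
    with C(2) have "0 \<le> snd i"
      by (simp add: less_imp_le)
    then show "emeasure lebesgue (g ` B i) = emeasure lebesgue (B i)"
      unfolding gB by (simp add: B_def emeasure_ball)
  qed
  also have "\<dots> = emeasure lebesgue (\<Union>i\<in>C. B i)"
    using C(1) disjB by (intro emeasure_UN_countable[symmetric]) (auto simp: B_def[abs_def])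
  also have "\<dots> \<le> emeasure lebesgue U"
    using C(2) U by (intro emeasure_mono) (fastforce simp: B_def borel_open)+
  finally show ?thesis .
qed

lemma emeasure_orthogonal_image_le:
  fixes g :: "'a::euclidean_space \<Rightarrow> 'a"
  assumes g: "orthogonal_transformation g" and S: "S \<in> sets lebesgue"
  shows "emeasure lebesgue (g ` S) \<le> emeasure lebesgue S"
proof (rule ennreal_le_epsilon)
  fix e :: real
  assume "0 < e"
  with S obtain U where U: "open U" "S \<subseteq> U" "U - S \<in> lmeasurable" "emeasure lebesgue (U - S) < e"
    by (rule sets_lebesgue_outer_open)
  have "open (g ` U)"
    using g U(1) by (simp add: open_bijective_linear_image_eq orthogonal_transformation_linear
        orthogonal_transformation_bij)
  then have "emeasure lebesgue (g ` S) \<le> emeasure lebesgue (g ` U)"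
    using U(2) by (intro emeasure_mono image_mono) (auto simp: borel_open)
  also have "\<dots> \<le> emeasure lebesgue U"
    using g U(1) by (rule emeasure_orthogonal_image_open_le)
  also have "\<dots> \<le> emeasure lebesgue S + emeasure lebesgue (U - S)"
    using S U(3) emeasure_subadditive[of S lebesgue "U - S"] U(2) by (simp add: Un_absorb1)
  also have "\<dots> \<le> emeasure lebesgue S + e"
    using U(4) by (intro add_left_mono) simp
  finally show "emeasure lebesgue (g ` S) \<le> emeasure lebesgue S + e" .
qed

lemma orthogonal_transformation_exists_euclidean:
  fixes a b :: "'a::euclidean_space"
  assumes "norm a = norm b"
  obtains g where "orthogonal_transformation g" "g a = b"
proof (cases "a = b")
  case True
  with that[of "\<lambda>x. x"] show ?thesis
    by simp
next
  case False
  define v where "v = a - b"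
  \<comment> \<open>the Householder reflection in the hyperplane orthogonal to v\<close>
  define g where "g x = x - (2 * (x \<bullet> v) / (v \<bullet> v)) *\<^sub>R v" for x
  have vv: "v \<bullet> v \<noteq> 0"
    using False by (simp add: v_def)
  have "linear g"
    unfolding g_def by (intro linearI) (auto simp: algebra_simps inner_add_left add_divide_distrib)
  moreover have "g x \<bullet> g x = x \<bullet> x" for x
    using vv unfolding g_def by (simp add: inner_diff_left inner_diff_right inner_commute field_simps power2_eq_square)
  ultimately have "orthogonal_transformation g"
    by (simp add: orthogonal_transformation norm_eq_sqrt_inner)
  moreover have "g a = b"
  proof -
    have "a \<bullet> a = b \<bullet> b"
      using assms by (simp add: dot_square_norm)
    then have "2 * (a \<bullet> v) = v \<bullet> v"
      by (simp add: v_def inner_diff_left inner_diff_right inner_commute)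
    with vv show ?thesis
      by (simp add: g_def v_def)
  qed
  ultimately show ?thesis by (rule that)
qed

definition axial_cone :: "'a::euclidean_space \<Rightarrow> real \<Rightarrow> 'a set" where
  "axial_cone u r = {x. 0 \<le> x \<bullet> u \<and> x \<bullet> u \<le> 1 \<and> norm (x - (x \<bullet> u) *\<^sub>R u) \<le> r * (x \<bullet> u)}"

lemma closed_axial_cone: "closed (axial_cone u r)"
  unfolding axial_cone_def by (intro closed_Collect_conj closed_Collect_le continuous_intros)

lemma norm_diff_Basis_projection:
  fixes y b :: "'a::euclidean_space"
  assumes "b \<in> Basis"
  shows "norm (y - (y \<bullet> b) *\<^sub>R b) = sqrt (\<Sum>c\<in>Basis - {b}. (y \<bullet> c)\<^sup>2)"
proof -
  have "norm (y - (y \<bullet> b) *\<^sub>R b) = sqrt (\<Sum>c\<in>Basis. ((y - (y \<bullet> b) *\<^sub>R b) \<bullet> c)\<^sup>2)"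
    unfolding norm_eq_sqrt_inner euclidean_inner[of "y - (y \<bullet> b) *\<^sub>R b" "y - (y \<bullet> b) *\<^sub>R b"] by (simp only: power2_eq_square)
  also have "(\<Sum>c\<in>Basis. ((y - (y \<bullet> b) *\<^sub>R b) \<bullet> c)\<^sup>2) = (\<Sum>c\<in>Basis. if c = b then 0 else (y \<bullet> c)\<^sup>2)"
    using assms by (intro sum.cong) (auto simp: inner_diff_left inner_Basis)
  also have "\<dots> = (\<Sum>c\<in>Basis - {b}. (y \<bullet> c)\<^sup>2)"
    by (simp add: sum.If_cases Diff_eq)
  finally show ?thesis .
qed

lemma emeasure_axial_cone_Basis:
  fixes b :: "'a::euclidean_space"
  assumes b: "b \<in> Basis" and r: "r > 0"
  shows "emeasure lborel (axial_cone b r) = ennreal (unit_ball_vol (DIM('a) - 1) * r ^ (DIM('a) - 1) / DIM('a))"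
proof -
  define A where "A = Basis - {b}"
  have A: "finite A" "b \<notin> A" "insert b A = Basis" "card A = DIM('a) - 1"
    using b by (auto simp: A_def)
  have coord: "(\<Sum>c\<in>Basis. f c *\<^sub>R c) \<bullet> b' = f b'" if "b' \<in> Basis" for f and b' :: 'a
    using that by (simp add: inner_sum_left inner_Basis if_distrib[of "\<lambda>x. _ * x"] sum.delta cong: if_cong)
  have "emeasure lborel (axial_cone b r) = emeasure (Pi\<^sub>M Basis (\<lambda>_. lborel))
      ((\<lambda>f. \<Sum>c\<in>Basis. f c *\<^sub>R c) -` axial_cone b r \<inter> space (Pi\<^sub>M Basis (\<lambda>_. lborel)))"
    by (subst lborel_eq) (simp add: emeasure_distr closed_axial_cone borel_closed)
  also have "(\<lambda>f. \<Sum>c\<in>Basis. f c *\<^sub>R c) -` axial_cone b r \<inter> space (Pi\<^sub>M Basis (\<lambda>_. lborel))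
      = {f \<in> space (Pi\<^sub>M Basis (\<lambda>_. lborel)). 0 \<le> f b \<and> f b \<le> 1 \<and> sqrt (\<Sum>c\<in>A. (f c)\<^sup>2) \<le> r * f b}"
    using b A(3) by (auto simp: axial_cone_def norm_diff_Basis_projection coord A_def)
  also have "emeasure (Pi\<^sub>M Basis (\<lambda>_. lborel)) \<dots> = ennreal (unit_ball_vol (card A) * r ^ card A / Suc (card A))"
    using emeasure_PiM_cone[OF A(1,2) r] by (simp only: A(3))
  finally show ?thesis
    using A by simp
qed

lemma orthogonal_image_axial_cone:
  fixes g :: "'a::euclidean_space \<Rightarrow> 'a"
  assumes g: "orthogonal_transformation g"
  shows "g ` axial_cone u r = axial_cone (g u) r"
proof -
  have mem: "g x \<in> axial_cone (g u) r \<longleftrightarrow> x \<in> axial_cone u r" for x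
  proof -
    have "g x \<bullet> g u = x \<bullet> u"
      using g by (simp add: orthogonal_transformation_def)
    moreover have "g x - (x \<bullet> u) *\<^sub>R g u = g (x - (x \<bullet> u) *\<^sub>R u)"
      using orthogonal_transformation_linear[OF g] by (simp add: linear_diff linear_cmul)
    ultimately show ?thesis
      using g by (simp add: axial_cone_def orthogonal_transformation_norm)
  qed
  show ?thesis
  proof (intro equalityI subsetI)
    fix y
    assume "y \<in> axial_cone (g u) r"
    moreover obtain x where "y = g x"
      using orthogonal_transformation_surj[OF g] by (metis surjD)
    ultimately show "y \<in> g ` axial_cone u r"
      using mem by auto
  qed (use mem in auto)
qed

lemma emeasure_axial_cone_le:
  fixes u :: "'a::euclidean_space"
  assumes u: "norm u = 1" and r: "r > 0"
  shows "emeasure lborel (axial_cone u r) \<le> ennreal (unit_ball_vol (DIM('a) - 1) * r ^ (DIM('a) - 1) / DIM('a))"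
proof -
  obtain b :: 'a where b: "b \<in> Basis"
    using nonempty_Basis by blast
  with u obtain g where g: "orthogonal_transformation g" "g b = u"
    by (metis norm_Basis orthogonal_transformation_exists_euclidean)
  have "emeasure lborel (axial_cone u r) = emeasure lebesgue (g ` axial_cone b r)"
    using g by (simp add: orthogonal_image_axial_cone closed_axial_cone borel_closed)
  also have "\<dots> \<le> emeasure lebesgue (axial_cone b r)"
    using g(1) by (rule emeasure_orthogonal_image_le) (simp add: closed_axial_cone borel_closed)
  also have "\<dots> = emeasure lborel (axial_cone b r)"
    by (simp add: closed_axial_cone borel_closed)
  also have "\<dots> = ennreal (unit_ball_vol (DIM('a) - 1) * r ^ (DIM('a) - 1) / DIM('a))"
    using b r by (rule emeasure_axial_cone_Basis)
  finally show ?thesis .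
qed

lemma norm_diff_le_imp_inner_ge:
  fixes u y :: "'a::real_inner"
  assumes "norm u = 1" "norm y = 1" "norm (y - u) \<le> \<epsilon>"
  shows "1 - \<epsilon>\<^sup>2 / 2 \<le> y \<bullet> u"
proof -
  have "y \<bullet> y = 1" "u \<bullet> u = 1"
    using assms(1,2) by (simp_all add: dot_square_norm)
  then have "(norm (y - u))\<^sup>2 = 2 - 2 * (y \<bullet> u)"
    by (simp add: power2_norm_eq_inner inner_diff_left inner_diff_right inner_commute)
  moreover have "(norm (y - u))\<^sup>2 \<le> \<epsilon>\<^sup>2"
    using assms(3) by (simp add: power_mono)
  ultimately show ?thesis by simp
qed

lemma in_axial_cone_if_inner_ge:
  fixes u x :: "'a::euclidean_space"
  assumes u: "norm u = 1" and c: "0 < c" "c \<le> 1" and x: "norm x \<le> 1" "c * norm x \<le> x \<bullet> u"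
  shows "x \<in> axial_cone u (sqrt (1 - c\<^sup>2) / c)"
proof -
  have "0 \<le> c * norm x"
    using c by simp
  with x have xu: "0 \<le> x \<bullet> u" "x \<bullet> u \<le> 1"
    using norm_cauchy_schwarz[of x u] u by auto
  have slope_nonneg: "0 \<le> sqrt (1 - c\<^sup>2) / c"
    using c by (simp add: power_le_one)
  have "u \<bullet> u = 1"
    using u by (simp add: dot_square_norm)
  then have "(norm (x - (x \<bullet> u) *\<^sub>R u))\<^sup>2 = x \<bullet> x - (x \<bullet> u)\<^sup>2"
    unfolding power2_norm_eq_inner by (simp add: inner_diff_left inner_diff_right inner_commute power2_eq_square)
  also have "\<dots> \<le> (1 - c\<^sup>2) / c\<^sup>2 * (x \<bullet> u)\<^sup>2"
  proof -
    have "(c * norm x)\<^sup>2 \<le> (x \<bullet> u)\<^sup>2"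
      using x(2) \<open>0 \<le> c * norm x\<close> by (rule power_mono)
    then have "c\<^sup>2 * (x \<bullet> x) \<le> (x \<bullet> u)\<^sup>2"
      by (simp only: power_mult_distrib dot_square_norm)
    with c show ?thesis
      by (simp add: field_simps)
  qed
  also have "\<dots> = (sqrt (1 - c\<^sup>2) / c * (x \<bullet> u))\<^sup>2"
    using c by (simp add: power_mult_distrib power_divide power_le_one)
  finally have "norm (x - (x \<bullet> u) *\<^sub>R u) \<le> sqrt (1 - c\<^sup>2) / c * (x \<bullet> u)"
    using slope_nonneg xu(1) by (rule power2_le_imp_le[OF _ mult_nonneg_nonneg])
  with xu show ?thesis
    by (simp add: axial_cone_def)
qed

lemma measure_sphere_uniform:
  fixes C :: "'a::euclidean_space set"
  assumes C: "C \<in> sets borel"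
  shows "measure sphere_uniform C
    = measure lborel {x \<in> cball 0 1. x /\<^sub>R norm x \<in> C} / unit_ball_vol DIM('a)"
proof -
  define f where "f x = x /\<^sub>R norm x" for x :: 'a
  have f: "f \<in> borel_measurable borel"
    unfolding f_def by measurable
  have "measure sphere_uniform C = measure (uniform_measure lborel (cball 0 1)) (f -` C)"
    unfolding sphere_uniform_def f_def[symmetric] using f C by (subst measure_distr) auto
  also have "\<dots> = measure lborel (cball 0 1 \<inter> f -` C) / measure lborel (cball (0::'a) 1)"
  proof (intro measure_uniform_measure)
    have "unit_ball_vol DIM('a) \<noteq> 0"
      using unit_ball_vol_pos[of "DIM('a)"] by linarith
    then show "emeasure lborel (cball (0::'a) 1) \<noteq> 0" "emeasure lborel (cball (0::'a) 1) \<noteq> \<infinity>"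
      by (simp_all add: emeasure_cball)
    show "f -` C \<in> sets lborel"
      using measurable_sets[OF f C] by simp
  qed
  also have "cball 0 1 \<inter> f -` C = {x \<in> cball 0 1. x /\<^sub>R norm x \<in> C}"
    by (auto simp: f_def)
  finally show ?thesis
    by (simp add: content_cball)
qed

(* tan theta for the angular radius theta of a spherical cap of chordal radius eps,
   where cos theta = 1 - eps^2/2 *)
definition cap_slope :: "real \<Rightarrow> real" where
  "cap_slope \<epsilon> = sqrt (1 - (1 - \<epsilon>\<^sup>2 / 2)\<^sup>2) / (1 - \<epsilon>\<^sup>2 / 2)"

lemma cap_slope_pos:
  assumes "0 < \<epsilon>" "\<epsilon>\<^sup>2 < 2"
  shows "0 < cap_slope \<epsilon>"
proof -
  have "0 < 1 - \<epsilon>\<^sup>2 / 2" "1 - \<epsilon>\<^sup>2 / 2 < 1"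
    using assms by auto
  then have "(1 - \<epsilon>\<^sup>2 / 2)\<^sup>2 < 1"
    by (simp add: power_less_one_iff)
  with \<open>0 < 1 - \<epsilon>\<^sup>2 / 2\<close> show ?thesis
    by (simp add: cap_slope_def)
qed

lemma cap_slope_less:
  assumes "0 < \<epsilon>" "\<epsilon> < 1"
  shows "cap_slope \<epsilon> < \<epsilon> / sqrt (1 - \<epsilon>\<^sup>2)"
proof -
  define t where "t = \<epsilon>\<^sup>2"
  define c where "c = 1 - t / 2"
  have t: "0 < t" "t < 1"
    using assms by (auto simp: t_def power_less_one_iff)
  then have c: "c > 0"
    by (simp add: c_def)
  have "(1 - c\<^sup>2) * (1 - t) < t * c\<^sup>2"
  proof -
    have "t * c\<^sup>2 - (1 - c\<^sup>2) * (1 - t) = t * t / 4"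
      unfolding c_def by (simp add: power2_eq_square field_simps)
    moreover have "0 < t * t / 4"
      using t by simp
    ultimately show ?thesis
      by linarith
  qed
  with c t have "(1 - c\<^sup>2) / c\<^sup>2 < t / (1 - t)"
    by (simp add: field_simps)
  then have "sqrt ((1 - c\<^sup>2) / c\<^sup>2) < sqrt (t / (1 - t))"
    by simp
  moreover have "sqrt ((1 - c\<^sup>2) / c\<^sup>2) = cap_slope \<epsilon>"
    using c by (simp add: cap_slope_def c_def t_def real_sqrt_divide)
  moreover have "sqrt (t / (1 - t)) = \<epsilon> / sqrt (1 - \<epsilon>\<^sup>2)"
    using assms by (simp add: t_def real_sqrt_divide)
  ultimately show ?thesis
    by simp
qed

lemma sphere_area_eq_unit_ball_vol:
  assumes "p > 0"
  shows "sphere_area p = p * unit_ball_vol p"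
proof -
  have "real p / 2 \<notin> \<int>\<^sub>\<le>\<^sub>0"
    using assms nonpos_Ints_nonpos by fastforce
  then have Gamma_succ: "Gamma (real p / 2 + 1) = real p / 2 * Gamma (real p / 2)"
    by (rule Gamma_plus1)
  have "Gamma (real p / 2) > 0"
    using assms by (intro Gamma_real_pos) simp
  with assms show ?thesis
    unfolding sphere_area_def unit_ball_vol_def Gamma_succ by (simp add: field_simps)
qed

lemma ball_vol_eq_unit_ball_vol: "ball_vol p = unit_ball_vol p"
  by (simp add: ball_vol_def unit_ball_vol_def)

lemma cone_over_cap_subset_axial_cone:
  fixes u :: "'a::euclidean_space"
  assumes u: "norm u = 1" and \<epsilon>: "0 < \<epsilon>" "\<epsilon>\<^sup>2 < 2"
  shows "{x \<in> cball 0 1. norm (x /\<^sub>R norm x - u) \<le> \<epsilon>} \<subseteq> axial_cone u (cap_slope \<epsilon>)"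
proof
  fix x :: 'a
  assume x: "x \<in> {x \<in> cball 0 1. norm (x /\<^sub>R norm x - u) \<le> \<epsilon>}"
  define c where "c = 1 - \<epsilon>\<^sup>2 / 2"
  have c: "0 < c" "c \<le> 1"
    using \<epsilon> by (auto simp: c_def)
  have "c * norm x \<le> x \<bullet> u"
  proof (cases "x = 0")
    case False
    then have "c \<le> (x /\<^sub>R norm x) \<bullet> u"
      using x u unfolding c_def by (intro norm_diff_le_imp_inner_ge) auto
    with False show ?thesis
      by (simp add: field_simps)
  qed simp
  with x u c show "x \<in> axial_cone u (cap_slope \<epsilon>)"
    using in_axial_cone_if_inner_ge[of u c x] by (simp add: cap_slope_def c_def)
qed

lemma sphere_uniform_cap_le:
  fixes u :: "'a::euclidean_space"
  assumes u: "norm u = 1" and \<epsilon>: "0 < \<epsilon>" "\<epsilon>\<^sup>2 < 2"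
  shows "measure sphere_uniform {y. norm (y - u) \<le> \<epsilon>}
    \<le> cap_slope \<epsilon> ^ (DIM('a) - 1) * unit_ball_vol (DIM('a) - 1) / (DIM('a) * unit_ball_vol DIM('a))"
proof -
  let ?cap = "{y. norm (y - u) \<le> \<epsilon>}"
  let ?vol = "unit_ball_vol (DIM('a) - 1) * cap_slope \<epsilon> ^ (DIM('a) - 1) / DIM('a)"
  have "emeasure lborel {x \<in> cball 0 1. x /\<^sub>R norm x \<in> ?cap} \<le> emeasure lborel (axial_cone u (cap_slope \<epsilon>))"
    using cone_over_cap_subset_axial_cone[OF u \<epsilon>] closed_axial_cone
    by (intro emeasure_mono) (auto intro: borel_closed)
  also have "\<dots> \<le> ennreal ?vol"
    using u cap_slope_pos[OF \<epsilon>] by (rule emeasure_axial_cone_le)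
  finally have vol: "measure lborel {x \<in> cball 0 1. x /\<^sub>R norm x \<in> ?cap} \<le> ?vol"
    unfolding measure_def by (rule enn2real_leI[rotated]) (use cap_slope_pos[OF \<epsilon>] in simp)
  have "?cap \<in> sets borel"
    by (intro borel_closed closed_Collect_le continuous_intros)
  then have "measure sphere_uniform ?cap
      = measure lborel {x \<in> cball 0 1. x /\<^sub>R norm x \<in> ?cap} / unit_ball_vol DIM('a)"
    by (rule measure_sphere_uniform)
  also have "\<dots> \<le> ?vol / unit_ball_vol DIM('a)"
    using vol by (rule divide_right_mono) simp
  also have "\<dots> = cap_slope \<epsilon> ^ (DIM('a) - 1) * unit_ball_vol (DIM('a) - 1) / (DIM('a) * unit_ball_vol DIM('a))"
    by simp
  finally show ?thesis .
qed

theorem lemma6: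
  fixes \<Psi>0 :: "complex ^ 'n" and \<epsilon> :: real
  assumes "norm \<Psi>0 = 1" and "0 < \<epsilon>" and "\<epsilon> < 1"
  shows "measure sphere_uniform {\<Psi> :: complex ^ 'n. norm (\<Psi> - \<Psi>0) \<le> \<epsilon>}
    < (\<epsilon> / sqrt (1 - \<epsilon>\<^sup>2)) ^ (2 * CARD('n) - 1) * ball_vol (2 * CARD('n) - 1)
        / sphere_area (2 * CARD('n))"
proof -
  let ?p = "DIM(complex ^ 'n)"
  have "0 < CARD('n)"
    by (rule finite_UNIV_card_ge_0) simp
  then have "?p - 1 \<noteq> 0"
    by (simp only: DIM_cart DIM_complex)
  have "\<epsilon>\<^sup>2 < 1"
    using assms(2,3) by (simp add: power_less_one_iff)
  then have "\<epsilon>\<^sup>2 < 2"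
    by simp
  with assms(1,2) have "measure sphere_uniform {\<Psi>. norm (\<Psi> - \<Psi>0) \<le> \<epsilon>}
      \<le> cap_slope \<epsilon> ^ (?p - 1) * unit_ball_vol (?p - 1) / (?p * unit_ball_vol ?p)"
    by (rule sphere_uniform_cap_le)
  also have "\<dots> < (\<epsilon> / sqrt (1 - \<epsilon>\<^sup>2)) ^ (?p - 1) * unit_ball_vol (?p - 1) / (?p * unit_ball_vol ?p)"
  proof -
    have "cap_slope \<epsilon> ^ (?p - 1) < (\<epsilon> / sqrt (1 - \<epsilon>\<^sup>2)) ^ (?p - 1)"
      using cap_slope_less[OF assms(2,3)] cap_slope_pos[OF assms(2) \<open>\<epsilon>\<^sup>2 < 2\<close>]
        \<open>?p - 1 \<noteq> 0\<close> by (intro power_strict_mono) auto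
    moreover have "0 < unit_ball_vol (?p - 1)"
      by (rule unit_ball_vol_pos, rule of_nat_0_le_iff)
    ultimately show ?thesis
      by (intro divide_strict_right_mono mult_strict_right_mono) auto
  qed
  also have "\<dots> = (\<epsilon> / sqrt (1 - \<epsilon>\<^sup>2)) ^ (2 * CARD('n) - 1) * ball_vol (2 * CARD('n) - 1)
        / sphere_area (2 * CARD('n))"
    by (simp add: ball_vol_eq_unit_ball_vol sphere_area_eq_unit_ball_vol mult.commute)
  finally show ?thesis .
qed

end
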